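(* Let $k\ge r\ge 3$ and $t\ge 0$ be integers and let $\pi\in\mathbb{C}(k,r)$ be a partition in which both $2t+1$ and $2t+2$ occur as parts. Then every part equal to $2t+2$ has a mark in $GG(\pi)$ strictly greater than the mark of the part $2t+1$ in $GG(\pi)$.
   Context: A partition $\pi=(\pi_1,\dots,\pi_\ell)$ is a finite non-increasing sequence of positive integers. Göllnitz–Gordon marking: $GG(\pi)$ assigns a positive integer (mark) to each part, processing the parts from smallest to largest ($\pi_\ell,\dots,\pi_1$); $\pi_i$ receives the smallest positive integer different from the marks of all parts $\pi_g$ with $g>i$ and $\pi_i-\pi_g\le 2$, where $\pi_i-\pi_g<2$ is required when $\pi_i$ is odd. $\mathbb{C}(k,r)$: the set of partitions $\pi$ such that (i) no odd part is repeated; (ii) $\pi_i\ge\pi_{i+k-1}+2$ for $1\le i\le\ell-k+1$, with strict inequality if $\pi_i$ is even; (iii) at most $r-1$ parts are $\le 2$. (In particular $2t+1$ occurs at most once, so its mark is well defined.) *)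

theory Defs
  imports Main
begin

text \<open>Partitions are lists of positive naturals in non-increasing order;
  list index 0 corresponds to the largest part pi_1.\<close>

definition is_partition :: "nat list \<Rightarrow> bool" where
  "is_partition p \<longleftrightarrow> sorted_wrt (\<ge>) p \<and> (\<forall>x\<in>set p. 0 < x)"

text \<open>Goellnitz-Gordon marking. gg_marks p is the list of marks, aligned with p.
  Marks are computed from the smallest part (end of list) to the largest.\<close>

fun gg_marks :: "nat list \<Rightarrow> nat list" where
  "gg_marks [] = []"
| "gg_marks (x # xs) =
     (let ms = gg_marks xs;
          forb = {ms ! j | j. j < length xs \<and> int x - int (xs ! j) \<le> 2
                               \<and> (odd x \<longrightarrow> int x - int (xs ! j) < 2)}
      in (LEAST m. 0 < m \<and> m \<notin> forb) # ms)"

definition in_C :: "nat \<Rightarrow> nat \<Rightarrow> nat list \<Rightarrow> bool" where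
  "in_C k r p \<longleftrightarrow> is_partition p
     \<and> (\<forall>i j. i < j \<and> j < length p \<and> p ! i = p ! j \<longrightarrow> even (p ! i))
     \<and> (\<forall>i. i + k - 1 < length p \<longrightarrow>
            p ! i \<ge> p ! (i + k - 1) + 2 \<and> (even (p ! i) \<longrightarrow> p ! i > p ! (i + k - 1) + 2))
     \<and> card {i. i < length p \<and> p ! i \<le> 2} \<le> r - 1"

end

theory Submission
  imports Defs
begin

text \<open>Parts are listed in non-increasing order, so every part 2t+2 precedes every part
  2t+1, and the marks it must avoid include all marks that part 2t+1 must avoid (those of
  later parts 2t and 2t+1) as well as the mark of that part 2t+1 itself. Its least admissible
  positive mark is therefore larger.\<close>

definition gg_forbidden :: "nat list \<Rightarrow> nat \<Rightarrow> nat set" where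
  "gg_forbidden p i = (\<lambda>l. gg_marks p ! l) ` {l. i < l \<and> l < length p
      \<and> int (p ! i) - int (p ! l) \<le> 2 \<and> (odd (p ! i) \<longrightarrow> int (p ! i) - int (p ! l) < 2)}"

lemma length_gg_marks [simp]: "length (gg_marks p) = length p"
  by (induction p) (simp_all add: Let_def)

lemma gg_marks_Cons_nth_Suc [simp]: "gg_marks (x # xs) ! Suc j = gg_marks xs ! j"
  by (simp add: Let_def)

lemma gg_forbidden_Cons_Suc: "gg_forbidden (x # xs) (Suc i) = gg_forbidden xs i"
proof -
  have shift: "{l. Suc i < l \<and> l < length (x # xs) \<and> Q l} =
      Suc ` {l. i < l \<and> l < length xs \<and> Q (Suc l)}" for Q
    by (auto simp: image_iff Suc_less_eq2)
  show ?thesis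
    unfolding gg_forbidden_def by (subst shift) (simp add: image_image del: gg_marks.simps)
qed

lemma gg_forbidden_Cons_0:
  "gg_forbidden (x # xs) 0 = {gg_marks xs ! j | j. j < length xs
      \<and> int x - int (xs ! j) \<le> 2 \<and> (odd x \<longrightarrow> int x - int (xs ! j) < 2)}"
proof -
  have shift: "{l. 0 < l \<and> l < length (x # xs) \<and> Q l} = Suc ` {l. l < length xs \<and> Q (Suc l)}"
    for Q
    by (auto simp: image_iff gr0_conv_Suc)
  show ?thesis
    unfolding gg_forbidden_def by (subst shift) (auto simp: image_image simp del: gg_marks.simps)
qed

lemma gg_marks_nth:
  "i < length p \<Longrightarrow> gg_marks p ! i = (LEAST m. 0 < m \<and> m \<notin> gg_forbidden p i)"
proof (induction p arbitrary: i)
  case Nil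
  then show ?case by simp
next
  case (Cons x xs)
  show ?case
  proof (cases i)
    case 0
    then show ?thesis
      by (simp only: gg_marks.simps Let_def nth_Cons_0 gg_forbidden_Cons_0)
  next
    case (Suc j)
    with Cons show ?thesis
      by (simp add: gg_forbidden_Cons_Suc del: gg_marks.simps)
  qed
qed

lemma finite_gg_forbidden: "finite (gg_forbidden p i)"
  unfolding gg_forbidden_def by simp

lemma Least_pos_notin_less:
  fixes A B :: "nat set"
  assumes "finite B" and "insert (LEAST m. 0 < m \<and> m \<notin> A) A \<subseteq> B"
  shows "(LEAST m. 0 < m \<and> m \<notin> A) < (LEAST m. 0 < m \<and> m \<notin> B)"
proof -
  define a where "a = (LEAST m. 0 < m \<and> m \<notin> A)"
  define b where "b = (LEAST m. 0 < m \<and> m \<notin> B)"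
  obtain c :: nat where "c \<notin> insert 0 B"
    using assms(1) ex_new_if_finite infinite_UNIV_nat by blast
  then have "0 < c \<and> c \<notin> B"
    by simp
  then have "0 < b \<and> b \<notin> B"
    unfolding b_def by (rule LeastI)
  with assms(2) have "0 < b \<and> b \<notin> A" and "b \<noteq> a"
    unfolding a_def by auto
  moreover from this have "a \<le> b"
    unfolding a_def by (blast intro: Least_le)
  ultimately show ?thesis
    unfolding a_def[symmetric] b_def[symmetric] by simp
qed

lemma gg_forbidden_odd_subset_Suc:
  assumes sorted: "sorted_wrt (\<ge>) p"
    and "i < length p" "j < length p" "odd (p ! j)" "p ! i = Suc (p ! j)"
  shows "insert (gg_marks p ! j) (gg_forbidden p j) \<subseteq> gg_forbidden p i"
proof -
  have le_nth: "p ! b \<le> p ! a" if "a \<le> b" "b < length p" for a b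
    using sorted that by (cases "a = b") (simp_all add: sorted_wrt_iff_nth_less)
  have "i < j"
    using le_nth[of j i] assms(2-5) by linarith
  have mem: "gg_marks p ! l \<in> gg_forbidden p i"
    if "j \<le> l" "l < length p" "p ! j \<le> Suc (p ! l)" for l
  proof -
    have "p ! l \<le> p ! j"
      using le_nth that by blast
    then have "int (p ! i) - int (p ! l) \<le> 2" and "even (p ! i)"
      using that(3) assms(4,5) by simp_all
    then show ?thesis
      unfolding gg_forbidden_def using \<open>i < j\<close> that(1,2) by auto
  qed
  have "gg_forbidden p j \<subseteq> gg_forbidden p i"
    unfolding gg_forbidden_def[of p j] using assms(4) by (force intro: mem)
  with mem[of j] assms(3) show ?thesis
    by simp
qed

lemma gg_marks_odd_less_Suc:
  assumes "sorted_wrt (\<ge>) p"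
    and "i < length p" "j < length p" "odd (p ! j)" "p ! i = Suc (p ! j)"
  shows "gg_marks p ! j < gg_marks p ! i"
proof -
  have "insert (gg_marks p ! j) (gg_forbidden p j) \<subseteq> gg_forbidden p i"
    using assms by (rule gg_forbidden_odd_subset_Suc)
  then show ?thesis
    using Least_pos_notin_less[OF finite_gg_forbidden] by (simp add: gg_marks_nth assms(2,3))
qed

theorem lemma2p10:
  fixes k r t :: nat and p :: "nat list"
  assumes "k \<ge> r" and "r \<ge> 3"
    and "in_C k r p"
    and "2 * t + 1 \<in> set p" and "2 * t + 2 \<in> set p"
  shows "\<forall>i j. i < length p \<and> j < length p \<and> p ! i = 2 * t + 2 \<and> p ! j = 2 * t + 1
           \<longrightarrow> gg_marks p ! i > gg_marks p ! j"
proof (intro allI impI, elim conjE)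
  fix i j
  assume "i < length p" "j < length p" "p ! i = 2 * t + 2" "p ! j = 2 * t + 1"
  moreover have "sorted_wrt (\<ge>) p"
    using assms(3) unfolding in_C_def is_partition_def by blast
  ultimately show "gg_marks p ! i > gg_marks p ! j"
    by (intro gg_marks_odd_less_Suc) simp_all
qed

end
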